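(* Let $G$ be a group with Property RD with respect to a length function $l$ such that no conjugacy class $C(g)$ with $g\ne e$ grows polynomially (for each such $g$ and every polynomial $P$ there are infinitely many $m$ with $|\{h\in C(g):l(h)=m\}|>P(m)$). Then every bounded trace on $C^*_{\mathrm{red}}G$ is a scalar multiple of the canonical trace $\sum c_g g\mapsto c_e$.
   Context: A length function on $G$ is $l:G\to\mathbb{Z}_{\ge0}$ with $l(fg)\le l(f)+l(g)$, $l(g^{-1})=l(g)$, $l(e)=0$, and $l^{-1}(S)$ finite for finite $S$. $\|\sum c_g g\|_{H^s}^2=\sum|c_g|^2(1+l(g))^{2s}$. $G$ has Property RD with respect to $l$ if there are constants $C,s$ with $\|x\|_{C^*_{\mathrm{red}}G}\le C\|x\|_{H^s}$ for all $x\in\mathbb{C}G$. $C(g)$ is the conjugacy class of $g$. A trace is a bounded linear functional $\tau$ with $\tau(ab)=\tau(ba)$. *)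

theory Defs
  imports Complex_Main "HOL-Computational_Algebra.Polynomial"
begin

text \<open>The group G is a type of class group_add (not necessarily commutative):
  the group product f g is written f + g, the identity e is 0, the inverse is - g.
  Elements of the group ring CG are finitely supported functions G to complex.\<close>

definition supp :: "('g \<Rightarrow> complex) \<Rightarrow> 'g set" where
  "supp x = {g. x g \<noteq> 0}"

definition finsupp :: "('g \<Rightarrow> complex) \<Rightarrow> bool" where
  "finsupp x \<longleftrightarrow> finite (supp x)"

text \<open>Convolution product in CG (also the left regular action of CG on finitely
  supported vectors of l2(G)): (x*y)(g) = sum_h x(h) y(h^-1 g).\<close>
definition conv :: "('g::group_add \<Rightarrow> complex) \<Rightarrow> ('g \<Rightarrow> complex) \<Rightarrow> 'g \<Rightarrow> complex" where
  "conv x y = (\<lambda>g. \<Sum>h\<in>supp x. x h * y (- h + g))"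

definition l2norm :: "('g \<Rightarrow> complex) \<Rightarrow> real" where
  "l2norm \<xi> = sqrt (\<Sum>g\<in>supp \<xi>. (cmod (\<xi> g))\<^sup>2)"

text \<open>Reduced C*-norm: operator norm of left convolution on l2(G), computed on the
  dense subspace of finitely supported vectors.\<close>
definition red_norm :: "('g::group_add \<Rightarrow> complex) \<Rightarrow> real" where
  "red_norm x = Sup {l2norm (conv x \<xi>) | \<xi>. finsupp \<xi> \<and> l2norm \<xi> \<le> 1}"

definition length_function :: "('g::group_add \<Rightarrow> nat) \<Rightarrow> bool" where
  "length_function l \<longleftrightarrow>
     (\<forall>f g. l (f + g) \<le> l f + l g) \<and> (\<forall>g. l (- g) = l g) \<and> l 0 = 0 \<and>
     (\<forall>S. finite S \<longrightarrow> finite (l -` S))"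

definition Hs_norm :: "('g \<Rightarrow> nat) \<Rightarrow> real \<Rightarrow> ('g \<Rightarrow> complex) \<Rightarrow> real" where
  "Hs_norm l s x = sqrt (\<Sum>g\<in>supp x. (cmod (x g))\<^sup>2 * (1 + real (l g)) powr (2 * s))"

definition property_RD :: "('g::group_add \<Rightarrow> nat) \<Rightarrow> bool" where
  "property_RD l \<longleftrightarrow> (\<exists>C s. \<forall>x. finsupp x \<longrightarrow> red_norm x \<le> C * Hs_norm l s x)"

definition conj_class :: "'g::group_add \<Rightarrow> 'g set" where
  "conj_class g = {h + g - h | h. True}"

text \<open>A bounded trace on the reduced C*-algebra, described through its restriction to
  the dense subalgebra CG: a linear functional, bounded for the reduced norm, tracial.\<close>
definition bounded_trace :: "(('g::group_add \<Rightarrow> complex) \<Rightarrow> complex) \<Rightarrow> bool" where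
  "bounded_trace \<tau> \<longleftrightarrow>
     (\<forall>x y. finsupp x \<longrightarrow> finsupp y \<longrightarrow> \<tau> (\<lambda>g. x g + y g) = \<tau> x + \<tau> y) \<and>
     (\<forall>c x. finsupp x \<longrightarrow> \<tau> (\<lambda>g. c * x g) = c * \<tau> x) \<and>
     (\<exists>K. \<forall>x. finsupp x \<longrightarrow> cmod (\<tau> x) \<le> K * red_norm x) \<and>
     (\<forall>x y. finsupp x \<longrightarrow> finsupp y \<longrightarrow> \<tau> (conv x y) = \<tau> (conv y x))"

end

theory Submission
  imports Defs "HOL-Library.Indicator_Function"
begin

text \<open>A nonzero trace value at a nontrivial \<open>g\<close> spreads, by traciality, over the whole
  conjugacy class of \<open>g\<close>. Testing the trace against the indicator of the part of that class
  on the \<open>l\<close>-sphere of radius \<open>m\<close>, boundedness of the trace and Property RD bound the number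
  \<open>N\<close> of those elements by \<open>N |\<tau>(g)| \<le> D \<surd>N (1 + m)\<^sup>s\<close>, i.e. polynomially in \<open>m\<close>.
  This contradicts the growth hypothesis, so the trace vanishes off the identity and is
  therefore a multiple of the canonical trace.\<close>

lemma supp_indicator [simp]: "supp (indicator S :: 'g \<Rightarrow> complex) = S"
  by (auto simp: supp_def indicator_eq_0_iff)

lemma finsupp_indicator: "finite S \<Longrightarrow> finsupp (indicator S :: 'g \<Rightarrow> complex)"
  by (simp add: finsupp_def)

lemma finsupp_sum:
  assumes "finite F" "\<And>i. i \<in> F \<Longrightarrow> finsupp (f i)"
  shows "finsupp (\<lambda>k. \<Sum>i\<in>F. f i k)"
proof -
  have "supp (\<lambda>k. \<Sum>i\<in>F. f i k) \<subseteq> (\<Union>i\<in>F. supp (f i))"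
    by (auto simp: supp_def intro: ccontr)
  moreover have "finite (\<Union>i\<in>F. supp (f i))"
    using assms by (auto simp: finsupp_def)
  ultimately show ?thesis
    unfolding finsupp_def by (rule finite_subset)
qed

lemma indicator_eq_sum_singletons:
  "finite S \<Longrightarrow> (indicator S :: 'g \<Rightarrow> complex) = (\<lambda>k. \<Sum>h\<in>S. indicator {h} k)"
  by (simp add: fun_eq_iff indicator_def)

lemma finsupp_expansion:
  assumes "finsupp x"
  shows "x = (\<lambda>k. \<Sum>g\<in>supp x. x g * indicator {g} k)"
proof
  fix k
  have "(\<Sum>g\<in>supp x. x g * indicator {g} k) = (\<Sum>g\<in>supp x. if k = g then x g else 0)"
    by (rule sum.cong) auto
  also have "\<dots> = x k"
    using assms by (simp add: finsupp_def supp_def)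
  finally show "x k = (\<Sum>g\<in>supp x. x g * indicator {g} k)" by simp
qed

lemma conv_indicator_singleton: "conv (indicator {a}) y = (\<lambda>k. y (- a + k))"
  by (simp add: conv_def)

lemma conv_indicator_singletons:
  "conv (indicator {a}) (indicator {b}) = (indicator {a + b} :: 'g::group_add \<Rightarrow> complex)"
proof -
  have "- a + k = b \<longleftrightarrow> k = a + b" for k
    by (metis add.assoc add_minus_cancel minus_add_cancel)
  then show ?thesis
    unfolding conv_indicator_singleton by (auto simp: fun_eq_iff indicator_def)
qed

lemma red_norm_indicator_zero: "red_norm (indicator {0::'g::group_add}) = 1"
proof -
  have "conv (indicator {0}) \<xi> = \<xi>" for \<xi> :: "'g \<Rightarrow> complex"
    by (simp add: conv_indicator_singleton)
  moreover have "l2norm (indicator {0::'g} :: 'g \<Rightarrow> complex) = 1"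
    by (simp add: l2norm_def)
  ultimately show ?thesis
    unfolding red_norm_def by (intro cSup_eq_maximum) (force simp: finsupp_indicator)+
qed

lemma Hs_norm_indicator_sphere:
  assumes "finite S" "\<And>h. h \<in> S \<Longrightarrow> l h = m"
  shows "Hs_norm l s (indicator S) = sqrt (real (card S) * (1 + real m) powr (2 * s))"
  unfolding Hs_norm_def supp_indicator using assms by simp

lemma bounded_trace_scale:
  "bounded_trace \<tau> \<Longrightarrow> finsupp x \<Longrightarrow> \<tau> (\<lambda>g. c * x g) = c * \<tau> x"
  unfolding bounded_trace_def by blast

lemma bounded_trace_zero:
  assumes "bounded_trace \<tau>"
  shows "\<tau> (\<lambda>k. 0) = 0"
  using bounded_trace_scale[OF assms, of "\<lambda>k. 0" 0] by (simp add: finsupp_def supp_def)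

lemma bounded_trace_sum:
  assumes "bounded_trace \<tau>" "finite F" "\<And>i. i \<in> F \<Longrightarrow> finsupp (f i)"
  shows "\<tau> (\<lambda>k. \<Sum>i\<in>F. f i k) = (\<Sum>i\<in>F. \<tau> (f i))"
  using assms(2,3)
proof (induction F rule: finite_induct)
  case empty
  then show ?case using bounded_trace_zero[OF assms(1)] by simp
next
  case (insert a F)
  have "\<tau> (\<lambda>k. \<Sum>i\<in>insert a F. f i k) = \<tau> (\<lambda>k. f a k + (\<Sum>i\<in>F. f i k))"
    using insert by simp
  also have "\<dots> = \<tau> (f a) + \<tau> (\<lambda>k. \<Sum>i\<in>F. f i k)"
    using assms(1) insert finsupp_sum[of F f] unfolding bounded_trace_def by auto
  finally show ?case using insert by simp
qed

lemma bounded_trace_bound: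
  assumes "bounded_trace \<tau>"
  obtains K where "K \<ge> 0" "\<And>x. finsupp x \<Longrightarrow> cmod (\<tau> x) \<le> K * red_norm x"
proof -
  obtain K where K: "\<And>x. finsupp x \<Longrightarrow> cmod (\<tau> x) \<le> K * red_norm x"
    using assms unfolding bounded_trace_def by blast
  have "cmod (\<tau> (indicator {0})) \<le> K"
    using K[of "indicator {0}"] by (simp add: finsupp_indicator red_norm_indicator_zero)
  then have "0 \<le> K"
    by (meson norm_ge_zero order_trans)
  with K that show thesis by blast
qed

lemma bounded_trace_conj_invariant:
  assumes "bounded_trace \<tau>"
  shows "\<tau> (indicator {h + g - h}) = \<tau> (indicator {g::'g::group_add})"
proof -
  have "indicator {h + g - h} = conv (indicator {h}) (indicator {g - h})"
    unfolding conv_indicator_singletons by (simp only: diff_conv_add_uminus add.assoc)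
  then have "\<tau> (indicator {h + g - h}) = \<tau> (conv (indicator {g - h}) (indicator {h}))"
    using assms unfolding bounded_trace_def by (simp add: finsupp_indicator)
  also have "conv (indicator {g - h}) (indicator {h}) = (indicator {g} :: 'g \<Rightarrow> complex)"
    by (simp add: conv_indicator_singletons)
  finally show ?thesis .
qed

lemma bounded_trace_conj_class:
  "bounded_trace \<tau> \<Longrightarrow> h \<in> conj_class g \<Longrightarrow> \<tau> (indicator {h}) = \<tau> (indicator {g})"
  unfolding conj_class_def using bounded_trace_conj_invariant by blast

lemma card_sphere_le_of_Hs_bound:
  assumes D: "\<And>x. finsupp x \<Longrightarrow> cmod (\<tau> x) \<le> D * Hs_norm l s x"
    and tr: "bounded_trace \<tau>"
    and S: "finite S" "\<And>h. h \<in> S \<Longrightarrow> l h = m" "\<And>h. h \<in> S \<Longrightarrow> \<tau> (indicator {h}) = t"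
    and "t \<noteq> 0"
  shows "real (card S) \<le> (D / cmod t)\<^sup>2 * (1 + real m) powr (2 * s)"
proof -
  define n where "n = real (card S)"
  define q where "q = (1 + real m) powr (2 * s)"
  have "\<tau> (indicator S) = (\<Sum>h\<in>S. \<tau> (indicator {h}))"
    by (subst indicator_eq_sum_singletons[OF S(1)], rule bounded_trace_sum[OF tr S(1)])
       (simp add: finsupp_indicator)
  then have "\<tau> (indicator S) = of_nat (card S) * t"
    using S(3) by simp
  then have "n * cmod t \<le> D * sqrt (n * q)"
    using D[of "indicator S"] Hs_norm_indicator_sphere[OF S(1,2)]
    by (simp add: finsupp_indicator[OF S(1)] norm_mult n_def q_def)
  then have "(n * cmod t)\<^sup>2 \<le> (D * sqrt (n * q))\<^sup>2"
    by (rule power_mono) (simp add: n_def)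
  also have "\<dots> = D\<^sup>2 * (n * q)"
    by (simp add: power_mult_distrib n_def q_def)
  finally have "(n * cmod t)\<^sup>2 \<le> D\<^sup>2 * (n * q)" .
  then have "n * (n * (cmod t)\<^sup>2) \<le> n * (D\<^sup>2 * q)"
    by (simp add: power2_eq_square algebra_simps)
  then have "n * (cmod t)\<^sup>2 \<le> D\<^sup>2 * q"
    by (cases "n = 0") (auto simp: n_def q_def)
  then show ?thesis
    using \<open>t \<noteq> 0\<close> by (simp add: n_def q_def field_simps power_divide)
qed

lemma powr_le_power_ceiling:
  fixes x :: real
  assumes "1 \<le> x"
  shows "x powr a \<le> x ^ nat \<lceil>a\<rceil>"
proof -
  have "x powr a \<le> x powr real (nat \<lceil>a\<rceil>)"
    using assms by (intro powr_mono) linarith+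
  also have "\<dots> = x ^ nat \<lceil>a\<rceil>"
    using assms by (simp add: powr_realpow)
  finally show ?thesis .
qed

lemma conj_class_spheres_polynomially_bounded:
  fixes l :: "'g::group_add \<Rightarrow> nat"
  assumes lf: "length_function l" and rd: "property_RD l" and tr: "bounded_trace \<tau>"
    and t: "\<tau> (indicator {g}) \<noteq> 0"
  obtains P :: "real poly"
  where "\<And>m. real (card {h \<in> conj_class g. l h = m}) \<le> poly P (real m)"
proof -
  obtain K where K: "K \<ge> 0" "\<And>x. finsupp x \<Longrightarrow> cmod (\<tau> x) \<le> K * red_norm x"
    using bounded_trace_bound[OF tr] by blast
  obtain C s where Cs: "\<And>x. finsupp x \<Longrightarrow> red_norm x \<le> C * Hs_norm l s x"
    using rd unfolding property_RD_def by blast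
  have D: "cmod (\<tau> x) \<le> (K * C) * Hs_norm l s x" if "finsupp x" for x
    using K(2)[OF that] mult_left_mono[OF Cs[OF that] K(1)] by simp
  define A where "A = (K * C / cmod (\<tau> (indicator {g})))\<^sup>2"
  define k where "k = nat \<lceil>2 * s\<rceil>"
  show thesis
  proof
    fix m
    define S where "S = {h \<in> conj_class g. l h = m}"
    have "finite (l -` {m})"
      using lf unfolding length_function_def by blast
    then have "finite S"
      by (rule finite_subset[rotated]) (auto simp: S_def)
    then have "real (card S) \<le> A * (1 + real m) powr (2 * s)"
      unfolding A_def
      by (intro card_sphere_le_of_Hs_bound[where l = l, OF _ tr] D)
         (auto simp: S_def bounded_trace_conj_class[OF tr] t)
    also have "\<dots> \<le> A * (1 + real m) ^ k"
      unfolding k_def A_def by (intro mult_left_mono powr_le_power_ceiling) auto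
    also have "\<dots> = poly (smult A ([:1, 1:] ^ k)) (real m)"
      by (simp add: poly_power)
    finally show "real (card {h \<in> conj_class g. l h = m}) \<le> poly (smult A ([:1, 1:] ^ k)) (real m)"
      by (simp add: S_def)
  qed
qed

lemma bounded_trace_indicator_eq_zero:
  fixes l :: "'g::group_add \<Rightarrow> nat"
  assumes "length_function l" "property_RD l" "bounded_trace \<tau>"
    and growth: "\<forall>P :: real poly.
            infinite {m :: nat. real (card {h \<in> conj_class g. l h = m}) > poly P (real m)}"
  shows "\<tau> (indicator {g}) = 0"
proof (rule ccontr)
  assume "\<tau> (indicator {g}) \<noteq> 0"
  then obtain P :: "real poly"
    where "\<And>m. real (card {h \<in> conj_class g. l h = m}) \<le> poly P (real m)"
    using conj_class_spheres_polynomially_bounded assms(1-3) by blast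
  then have "{m. real (card {h \<in> conj_class g. l h = m}) > poly P (real m)} = {}"
    by (auto simp: not_less)
  with growth show False by (metis finite.emptyI)
qed

theorem mainTheorem8:
  fixes l :: "'g::group_add \<Rightarrow> nat"
    and \<tau> :: "('g \<Rightarrow> complex) \<Rightarrow> complex"
  assumes "length_function l"
    and "property_RD l"
    and "\<forall>g. g \<noteq> 0 \<longrightarrow> (\<forall>P :: real poly.
            infinite {m :: nat. real (card {h \<in> conj_class g. l h = m}) > poly P (real m)})"
    and "bounded_trace \<tau>"
  shows "\<exists>c :: complex. \<forall>x. finsupp x \<longrightarrow> \<tau> x = c * x 0"
proof (intro exI allI impI)
  fix x :: "'g \<Rightarrow> complex"
  assume x: "finsupp x"
  then have fin: "finite (supp x)" by (simp add: finsupp_def)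
  have "\<tau> x = (\<Sum>g\<in>supp x. \<tau> (\<lambda>k. x g * indicator {g} k))"
    by (subst finsupp_expansion[OF x], rule bounded_trace_sum[OF assms(4) fin])
       (simp add: finsupp_def supp_def indicator_eq_0_iff)
  also have "\<dots> = (\<Sum>g\<in>supp x. if g = 0 then x 0 * \<tau> (indicator {0}) else 0)"
    using bounded_trace_indicator_eq_zero[OF assms(1,2,4)] assms(3)
    by (intro sum.cong) (auto simp: bounded_trace_scale[OF assms(4)] finsupp_indicator)
  also have "\<dots> = \<tau> (indicator {0}) * x 0"
    using fin by (simp add: supp_def)
  finally show "\<tau> x = \<tau> (indicator {0}) * x 0" .
qed

end
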